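(* Let $C$ be an ordered field and let $\mathbb{M}$ be a model of $T_{\mathrm{Ham}}$ with underlying set $G_\infty$. Then there are (1) a definable subset $H\subseteq G$ which is $C$-linearly independent and dense in $(G,<_0)$, and (2) a definable subset $S\subsetneq G$ which is the underlying set of an elementary substructure of the ordered $C$-vector space $(G;+,<_0,(\lambda_c)_{c\in C})$.
   Context: Let $C$ be an ordered field. A Hamel space over $C$ is a $C$-vector space $G$ with two total orderings $<_0,<_1$, each making $G$ an ordered $C$-vector space, and a map $v:G\to G_\infty=G\cup\{\infty\}$ ($G<_0\infty$, $G<_1\infty$) such that for all $x,y\in G$, $\lambda\in C^{\times}$: $v(x)=\infty$ iff $x=0$; $v(x+y)\ge_0\min_0(v(x),v(y))$; $v(\lambda x)=v(x)$; $0<_1x<_1y\Rightarrow v(x)\ge_0v(y)$; $v(v(x))=v(x)$ (with $v(\infty)=\infty$); $v(x)>_10$. It is independent if for all $a_0<_0b_0$, $a_1<_1b_1$ in $G\cup\{\pm\infty\}$ some $z\in G$ has $a_0<_0z<_0b_0$, $a_1<_1z<_1b_1$; dense if for all $a<_0b$ in $G$ some $c$ has $a<_0v(c)<_0b$. $T_{\mathrm{Ham}}$ is the theory in the language $\{0,+,(\lambda_c)_{c\in C},<_0,<_1,v,\infty\}$ on universe $G_\infty$ (with $\infty$ absorbing for $+$, $\lambda_c$, $v$) whose models are exactly the independent dense Hamel spaces over $C$; "definable" refers to this language. $\lambda_c$ denotes scalar multiplication by $c$. *)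

theory Defs
  imports Complex_Main
begin

(* G is modelled by a type 'g, G_infinity by 'g option (None = infinity).
   C is a type 'c :: linordered_field. Addition of G is the (+) of 'g. *)

definition ordered_vs :: "('g::ab_group_add \<Rightarrow> 'g \<Rightarrow> bool) \<Rightarrow> ('c::linordered_field \<Rightarrow> 'g \<Rightarrow> 'g) \<Rightarrow> bool" where
  "ordered_vs lt smul \<longleftrightarrow>
     (\<forall>x. \<not> lt x x) \<and> (\<forall>x y z. lt x y \<longrightarrow> lt y z \<longrightarrow> lt x z) \<and>
     (\<forall>x y. x \<noteq> y \<longrightarrow> lt x y \<or> lt y x) \<and>
     (\<forall>x y z. lt x y \<longrightarrow> lt (x + z) (y + z)) \<and>
     (\<forall>c x y. 0 < c \<longrightarrow> lt x y \<longrightarrow> lt (smul c x) (smul c y))"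

fun olt :: "('g \<Rightarrow> 'g \<Rightarrow> bool) \<Rightarrow> 'g option \<Rightarrow> 'g option \<Rightarrow> bool" where
  "olt lt (Some a) (Some b) = lt a b"
| "olt lt (Some a) None = True"
| "olt lt None _ = False"

definition ole :: "('g \<Rightarrow> 'g \<Rightarrow> bool) \<Rightarrow> 'g option \<Rightarrow> 'g option \<Rightarrow> bool" where
  "ole lt a b \<longleftrightarrow> olt lt a b \<or> a = b"

definition omin :: "('g \<Rightarrow> 'g \<Rightarrow> bool) \<Rightarrow> 'g option \<Rightarrow> 'g option \<Rightarrow> 'g option" where
  "omin lt a b = (if ole lt a b then a else b)"

definition hamel_space ::
  "('g::ab_group_add \<Rightarrow> 'g \<Rightarrow> bool) \<Rightarrow> ('g \<Rightarrow> 'g \<Rightarrow> bool) \<Rightarrow>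
   ('c::linordered_field \<Rightarrow> 'g \<Rightarrow> 'g) \<Rightarrow> ('g \<Rightarrow> 'g option) \<Rightarrow> bool" where
  "hamel_space lt0 lt1 smul v \<longleftrightarrow>
     vector_space smul \<and> ordered_vs lt0 smul \<and> ordered_vs lt1 smul \<and>
     (\<forall>x. v x = None \<longleftrightarrow> x = 0) \<and>
     (\<forall>x y. ole lt0 (omin lt0 (v x) (v y)) (v (x + y))) \<and>
     (\<forall>c x. c \<noteq> 0 \<longrightarrow> v (smul c x) = v x) \<and>
     (\<forall>x y. lt1 0 x \<longrightarrow> lt1 x y \<longrightarrow> ole lt0 (v y) (v x)) \<and>
     (\<forall>x g. v x = Some g \<longrightarrow> v g = Some g) \<and>
     (\<forall>x. olt lt1 (Some 0) (v x))"

(* lower bound: None = -infinity; upper bound: None = +infinity *)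
definition above_lb :: "('g \<Rightarrow> 'g \<Rightarrow> bool) \<Rightarrow> 'g option \<Rightarrow> 'g \<Rightarrow> bool" where
  "above_lb lt a z = (case a of None \<Rightarrow> True | Some a' \<Rightarrow> lt a' z)"

definition below_ub :: "('g \<Rightarrow> 'g \<Rightarrow> bool) \<Rightarrow> 'g \<Rightarrow> 'g option \<Rightarrow> bool" where
  "below_ub lt z b = (case b of None \<Rightarrow> True | Some b' \<Rightarrow> lt z b')"

definition ext_lt :: "('g \<Rightarrow> 'g \<Rightarrow> bool) \<Rightarrow> 'g option \<Rightarrow> 'g option \<Rightarrow> bool" where
  "ext_lt lt a b = (case (a, b) of (Some a', Some b') \<Rightarrow> lt a' b' | _ \<Rightarrow> True)"

definition independent_hamel :: "('g \<Rightarrow> 'g \<Rightarrow> bool) \<Rightarrow> ('g \<Rightarrow> 'g \<Rightarrow> bool) \<Rightarrow> bool" where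
  "independent_hamel lt0 lt1 \<longleftrightarrow>
     (\<forall>a0 b0 a1 b1. ext_lt lt0 a0 b0 \<longrightarrow> ext_lt lt1 a1 b1 \<longrightarrow>
        (\<exists>z. above_lb lt0 a0 z \<and> below_ub lt0 z b0 \<and> above_lb lt1 a1 z \<and> below_ub lt1 z b1))"

definition dense_hamel :: "('g \<Rightarrow> 'g \<Rightarrow> bool) \<Rightarrow> ('g \<Rightarrow> 'g option) \<Rightarrow> bool" where
  "dense_hamel lt0 v \<longleftrightarrow>
     (\<forall>a b. lt0 a b \<longrightarrow> (\<exists>c. olt lt0 (Some a) (v c) \<and> olt lt0 (v c) (Some b)))"

definition model_T_Ham ::
  "('g::ab_group_add \<Rightarrow> 'g \<Rightarrow> bool) \<Rightarrow> ('g \<Rightarrow> 'g \<Rightarrow> bool) \<Rightarrow>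
   ('c::linordered_field \<Rightarrow> 'g \<Rightarrow> 'g) \<Rightarrow> ('g \<Rightarrow> 'g option) \<Rightarrow> bool" where
  "model_T_Ham lt0 lt1 smul v \<longleftrightarrow>
     hamel_space lt0 lt1 smul v \<and> independent_hamel lt0 lt1 \<and> dense_hamel lt0 v"

datatype 'c hterm = HVar nat | HZero | HInf | HPlus "'c hterm" "'c hterm"
  | HScal 'c "'c hterm" | HVal "'c hterm"

datatype 'c hform = HEq "'c hterm" "'c hterm" | HLess0 "'c hterm" "'c hterm"
  | HLess1 "'c hterm" "'c hterm" | HNot "'c hform" | HAnd "'c hform" "'c hform"
  | HEx nat "'c hform"

fun heval :: "('c \<Rightarrow> 'g::ab_group_add \<Rightarrow> 'g) \<Rightarrow> ('g \<Rightarrow> 'g option) \<Rightarrow>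
    (nat \<Rightarrow> 'g option) \<Rightarrow> 'c hterm \<Rightarrow> 'g option" where
  "heval smul v e (HVar n) = e n"
| "heval smul v e HZero = Some 0"
| "heval smul v e HInf = None"
| "heval smul v e (HPlus s t) =
     (case (heval smul v e s, heval smul v e t) of (Some x, Some y) \<Rightarrow> Some (x + y) | _ \<Rightarrow> None)"
| "heval smul v e (HScal c t) = map_option (smul c) (heval smul v e t)"
| "heval smul v e (HVal t) = (case heval smul v e t of None \<Rightarrow> None | Some x \<Rightarrow> v x)"

fun hsat :: "('g::ab_group_add \<Rightarrow> 'g \<Rightarrow> bool) \<Rightarrow> ('g \<Rightarrow> 'g \<Rightarrow> bool) \<Rightarrow>
    ('c \<Rightarrow> 'g \<Rightarrow> 'g) \<Rightarrow> ('g \<Rightarrow> 'g option) \<Rightarrow> 'c hform \<Rightarrow> (nat \<Rightarrow> 'g option) \<Rightarrow> bool" where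
  "hsat lt0 lt1 smul v (HEq s t) e = (heval smul v e s = heval smul v e t)"
| "hsat lt0 lt1 smul v (HLess0 s t) e = olt lt0 (heval smul v e s) (heval smul v e t)"
| "hsat lt0 lt1 smul v (HLess1 s t) e = olt lt1 (heval smul v e s) (heval smul v e t)"
| "hsat lt0 lt1 smul v (HNot f) e = (\<not> hsat lt0 lt1 smul v f e)"
| "hsat lt0 lt1 smul v (HAnd f g) e = (hsat lt0 lt1 smul v f e \<and> hsat lt0 lt1 smul v g e)"
| "hsat lt0 lt1 smul v (HEx n f) e = (\<exists>a. hsat lt0 lt1 smul v f (e(n := a)))"

(* definable (with parameters): defined by a formula with distinguished free variable 0,
   the other variables being interpreted by parameters from G_infinity *)
definition hdefinable :: "('g::ab_group_add \<Rightarrow> 'g \<Rightarrow> bool) \<Rightarrow> ('g \<Rightarrow> 'g \<Rightarrow> bool) \<Rightarrow>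
    ('c \<Rightarrow> 'g \<Rightarrow> 'g) \<Rightarrow> ('g \<Rightarrow> 'g option) \<Rightarrow> 'g option set \<Rightarrow> bool" where
  "hdefinable lt0 lt1 smul v D \<longleftrightarrow>
     (\<exists>(f :: 'c hform) e. D = {a. hsat lt0 lt1 smul v f (e(0 := a))})"

datatype 'c oterm = OVar nat | OPlus "'c oterm" "'c oterm" | OScal 'c "'c oterm"

datatype 'c oform = OEq "'c oterm" "'c oterm" | OLess "'c oterm" "'c oterm"
  | ONot "'c oform" | OAnd "'c oform" "'c oform" | OEx nat "'c oform"

fun oeval :: "('c \<Rightarrow> 'g::ab_group_add \<Rightarrow> 'g) \<Rightarrow> (nat \<Rightarrow> 'g) \<Rightarrow> 'c oterm \<Rightarrow> 'g" where
  "oeval smul e (OVar n) = e n"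
| "oeval smul e (OPlus s t) = oeval smul e s + oeval smul e t"
| "oeval smul e (OScal c t) = smul c (oeval smul e t)"

(* satisfaction in the substructure with universe S (quantifiers range over S) *)
fun osat :: "('g::ab_group_add \<Rightarrow> 'g \<Rightarrow> bool) \<Rightarrow> ('c \<Rightarrow> 'g \<Rightarrow> 'g) \<Rightarrow> 'g set \<Rightarrow>
    'c oform \<Rightarrow> (nat \<Rightarrow> 'g) \<Rightarrow> bool" where
  "osat lt smul S (OEq s t) e = (oeval smul e s = oeval smul e t)"
| "osat lt smul S (OLess s t) e = lt (oeval smul e s) (oeval smul e t)"
| "osat lt smul S (ONot f) e = (\<not> osat lt smul S f e)"
| "osat lt smul S (OAnd f g) e = (osat lt smul S f e \<and> osat lt smul S g e)"
| "osat lt smul S (OEx n f) e = (\<exists>a\<in>S. osat lt smul S f (e(n := a)))"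

definition elementary_substructure :: "('g::ab_group_add \<Rightarrow> 'g \<Rightarrow> bool) \<Rightarrow>
    ('c \<Rightarrow> 'g \<Rightarrow> 'g) \<Rightarrow> 'g set \<Rightarrow> bool" where
  "elementary_substructure lt smul S \<longleftrightarrow>
     S \<noteq> {} \<and> (\<forall>x\<in>S. \<forall>y\<in>S. x + y \<in> S) \<and> (\<forall>c. \<forall>x\<in>S. smul c x \<in> S) \<and>
     (\<forall>(f :: 'c oform) e. (\<forall>n. e n \<in> S) \<longrightarrow> (osat lt smul S f e \<longleftrightarrow> osat lt smul UNIV f e))"

definition dense_in :: "('g \<Rightarrow> 'g \<Rightarrow> bool) \<Rightarrow> 'g set \<Rightarrow> bool" where
  "dense_in lt H \<longleftrightarrow> (\<forall>a b. lt a b \<longrightarrow> (\<exists>h\<in>H. lt a h \<and> lt h b))"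

end

theory Submission
  imports Defs
begin

text \<open>The fixed points of the valuation are dense by the density axiom, and they are linearly
independent because, by the ultrametric inequality, a combination of distinct fixed points with
nonzero coefficients has the least of them as its value. For a nonzero value g the set of x
with v x \<ge> g is a definable subspace, proper by density. Any nonzero subspace S of an ordered
vector space is an elementary substructure: by Fourier-Motzkin elimination the truth of a
formula depends only on the signs of finitely many linear forms in its variables, and since S
is densely ordered without endpoints, a witness can be moved into S without changing those
signs (Tarski-Vaught test).\<close>

lemma finite_has_greatest_wrt:
  assumes "finite A" "A \<noteq> {}"
    and trans: "\<And>x y z. R x y \<Longrightarrow> R y z \<Longrightarrow> R x z"
    and total: "\<And>x y. x \<noteq> y \<Longrightarrow> R x y \<or> R y x"
  shows "\<exists>a\<in>A. \<forall>x\<in>A. x \<noteq> a \<longrightarrow> R x a"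
  using assms(1,2)
proof (induction A rule: finite_ne_induct)
  case (insert x F)
  then obtain a where a: "a \<in> F" "\<forall>y\<in>F. y \<noteq> a \<longrightarrow> R y a" by blast
  with \<open>x \<notin> F\<close> total[of x a] show ?case by (metis insert_iff trans)
qed simp

locale ordered_vector_space =
  fixes lt :: "'g::ab_group_add \<Rightarrow> 'g \<Rightarrow> bool"
    and smul :: "'c::linordered_field \<Rightarrow> 'g \<Rightarrow> 'g"
  assumes vector_space: "vector_space smul" and ordered: "ordered_vs lt smul"
begin

sublocale V: vector_space smul by (rule vector_space)

lemma lt_irrefl: "\<not> lt x x"
  using ordered unfolding ordered_vs_def by blast

lemma lt_trans: "lt x y \<Longrightarrow> lt y z \<Longrightarrow> lt x z"
  using ordered unfolding ordered_vs_def by blast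

lemma lt_linear: "x \<noteq> y \<Longrightarrow> lt x y \<or> lt y x"
  using ordered unfolding ordered_vs_def by blast

lemma lt_asym: "lt x y \<Longrightarrow> \<not> lt y x"
  using lt_irrefl lt_trans by blast

lemma lt_add_right: "lt x y \<Longrightarrow> lt (x + z) (y + z)"
  using ordered unfolding ordered_vs_def by blast

lemma lt_scale_pos: "0 < c \<Longrightarrow> lt x y \<Longrightarrow> lt (smul c x) (smul c y)"
  using ordered unfolding ordered_vs_def by blast

lemma lt_add_right_iff: "lt (x + z) (y + z) \<longleftrightarrow> lt x y"
proof
  assume "lt (x + z) (y + z)"
  from lt_add_right[OF this, of "- z"] show "lt x y" by simp
qed (rule lt_add_right)

lemma diff_pos_iff: "lt 0 (x - y) \<longleftrightarrow> lt y x"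
  using lt_add_right_iff[of y "- y" x] by simp

lemma lt_neg_iff: "lt x 0 \<longleftrightarrow> x \<noteq> 0 \<and> \<not> lt 0 x"
  using lt_linear lt_asym lt_irrefl by blast

lemma lt_add_pos: "lt 0 s \<Longrightarrow> lt x (x + s)"
  using diff_pos_iff[of "x + s" x] by simp

lemma lt_diff_pos: "lt 0 s \<Longrightarrow> lt (x - s) x"
  using diff_pos_iff[of x "x - s"] by simp

lemma scale_pos_iff:
  assumes "0 < c"
  shows "lt 0 (smul c x) \<longleftrightarrow> lt 0 x"
proof
  assume pos: "lt 0 (smul c x)"
  have "x \<noteq> 0"
    using pos lt_irrefl by auto
  moreover have "\<not> lt x 0"
    using lt_scale_pos[OF assms, of x 0] pos lt_asym V.scale_zero_right by metis
  ultimately show "lt 0 x"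
    using lt_linear by blast
qed (use lt_scale_pos[OF assms, of 0 x] in simp)

lemma lt_midpoint:
  assumes "lt x y"
  shows "lt x (smul (1/2) (x + y))" "lt (smul (1/2) (x + y)) y"
proof -
  have half: "smul (1/2) (z + z) = z" for z
    by (simp add: V.scale_right_distrib flip: V.scale_left_distrib)
  have "lt (x + x) (x + y)" "lt (x + y) (y + y)"
    using lt_add_right[OF assms, of x] lt_add_right[OF assms, of y] by (simp_all add: add.commute)
  then show "lt x (smul (1/2) (x + y))" "lt (smul (1/2) (x + y)) y"
    using lt_scale_pos[of "1/2"] half by (metis divide_pos_pos zero_less_one zero_less_numeral)+
qed

lemma olt_trans: "olt lt a b \<Longrightarrow> olt lt b c \<Longrightarrow> olt lt a c"
  by (cases a; cases b; cases c) (auto intro: lt_trans)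

lemma olt_irrefl: "\<not> olt lt a a"
  by (cases a) (auto simp: lt_irrefl)

lemma finite_has_max: "finite A \<Longrightarrow> A \<noteq> {} \<Longrightarrow> \<exists>a\<in>A. \<forall>x\<in>A. x \<noteq> a \<longrightarrow> lt x a"
  by (rule finite_has_greatest_wrt) (use lt_trans lt_linear in blast)+

lemma finite_has_min: "finite A \<Longrightarrow> A \<noteq> {} \<Longrightarrow> \<exists>a\<in>A. \<forall>x\<in>A. x \<noteq> a \<longrightarrow> lt a x"
  by (rule finite_has_greatest_wrt[where R = "\<lambda>x y. lt y x"]) (use lt_trans lt_linear in blast)+

lemma subspace_separates:
  assumes S: "V.subspace S" "s \<in> S" "lt 0 s"
    and AB: "finite A" "finite B" "A \<subseteq> S" "B \<subseteq> S" "\<And>a b. a \<in> A \<Longrightarrow> b \<in> B \<Longrightarrow> lt a b"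
  shows "\<exists>x\<in>S. (\<forall>a\<in>A. lt a x) \<and> (\<forall>b\<in>B. lt x b)"
proof -
  have below_max: "\<forall>a\<in>A. lt a x"
    if "a0 \<in> A" "\<forall>a\<in>A. a \<noteq> a0 \<longrightarrow> lt a a0" "lt a0 x" for a0 x
    using that lt_trans by metis
  have above_min: "\<forall>b\<in>B. lt x b"
    if "b0 \<in> B" "\<forall>b\<in>B. b \<noteq> b0 \<longrightarrow> lt b0 b" "lt x b0" for b0 x
    using that lt_trans by metis
  consider "A = {}" "B = {}" | "A = {}" "B \<noteq> {}" | "A \<noteq> {}" "B = {}" | "A \<noteq> {}" "B \<noteq> {}"
    by blast
  then show ?thesis
  proof cases
    case 1
    then show ?thesis using S(2) by blast
  next
    case 2
    then obtain b0 where b0: "b0 \<in> B" "\<forall>b\<in>B. b \<noteq> b0 \<longrightarrow> lt b0 b"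
      using finite_has_min[OF AB(2)] by blast
    have "b0 - s \<in> S"
      using b0(1) AB(4) S(1,2) by (blast intro: V.subspace_diff)
    moreover have "\<forall>b\<in>B. lt (b0 - s) b"
      using above_min[OF b0 lt_diff_pos[OF S(3)]] .
    ultimately show ?thesis
      using 2 by blast
  next
    case 3
    then obtain a0 where a0: "a0 \<in> A" "\<forall>a\<in>A. a \<noteq> a0 \<longrightarrow> lt a a0"
      using finite_has_max[OF AB(1)] by blast
    have "a0 + s \<in> S"
      using a0(1) AB(3) S(1,2) by (blast intro: V.subspace_add)
    moreover have "\<forall>a\<in>A. lt a (a0 + s)"
      using below_max[OF a0 lt_add_pos[OF S(3)]] .
    ultimately show ?thesis
      using 3 by blast
  next
    case 4
    obtain a0 where a0: "a0 \<in> A" "\<forall>a\<in>A. a \<noteq> a0 \<longrightarrow> lt a a0"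
      using finite_has_max[OF AB(1) 4(1)] by blast
    obtain b0 where b0: "b0 \<in> B" "\<forall>b\<in>B. b \<noteq> b0 \<longrightarrow> lt b0 b"
      using finite_has_min[OF AB(2) 4(2)] by blast
    define m where "m = smul (1/2) (a0 + b0)"
    have "m \<in> S"
      unfolding m_def using a0(1) b0(1) AB(3,4) S(1)
      by (blast intro: V.subspace_add V.subspace_scale)
    moreover have "lt a0 m" "lt m b0"
      unfolding m_def using lt_midpoint AB(5)[OF a0(1) b0(1)] by blast+
    ultimately show ?thesis
      using below_max[OF a0] above_min[OF b0] by blast
  qed
qed

definition same_sign :: "'g \<Rightarrow> 'g \<Rightarrow> bool" where
  "same_sign x y \<longleftrightarrow> (x = 0 \<longleftrightarrow> y = 0) \<and> (lt 0 x \<longleftrightarrow> lt 0 y)"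

lemma same_sign_sym: "same_sign x y \<Longrightarrow> same_sign y x"
  by (auto simp: same_sign_def)

lemma same_sign_diff_iff:
  "same_sign (x - y) (x' - y') \<longleftrightarrow> (x = y \<longleftrightarrow> x' = y') \<and> (lt y x \<longleftrightarrow> lt y' x')"
  by (simp add: same_sign_def diff_pos_iff)

lemma same_sign_scale:
  assumes "c \<noteq> 0" "same_sign x y"
  shows "same_sign (smul c x) (smul c y)"
proof (cases "0 < c")
  case True
  then show ?thesis
    using assms scale_pos_iff by (simp add: same_sign_def)
next
  case False
  then have "0 < - c"
    using assms(1) by simp
  moreover have "same_sign (- x) (- y)"
    using assms(2) lt_neg_iff diff_pos_iff[of 0 x] diff_pos_iff[of 0 y]
    by (simp add: same_sign_def)
  ultimately have "same_sign (smul (- c) (- x)) (smul (- c) (- y))"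
    unfolding same_sign_def scale_pos_iff[OF \<open>0 < - c\<close>] by simp
  then show ?thesis
    by simp
qed

lemma cut_realized_in_subspace:
  assumes S: "V.subspace S" "s \<in> S" "lt 0 s"
    and I: "finite I" "P' ` I \<subseteq> S"
    and iso: "\<And>i j. i \<in> I \<Longrightarrow> j \<in> I \<Longrightarrow>
      (P i = P j \<longleftrightarrow> P' i = P' j) \<and> (lt (P i) (P j) \<longleftrightarrow> lt (P' i) (P' j))"
  shows "\<exists>b'\<in>S. \<forall>i\<in>I. (b = P i \<longleftrightarrow> b' = P' i) \<and> (lt (P i) b \<longleftrightarrow> lt (P' i) b')"
proof (cases "\<exists>i\<in>I. b = P i")
  case True
  then obtain i where i: "i \<in> I" "b = P i"
    by blast
  have "(b = P j \<longleftrightarrow> P' i = P' j) \<and> (lt (P j) b \<longleftrightarrow> lt (P' j) (P' i))" if "j \<in> I" for j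
    using iso[OF i(1) that] iso[OF that i(1)] i(2) by simp
  then show ?thesis
    using i(1) I(2) by blast
next
  case False
  define L where "L = {i\<in>I. lt (P i) b}"
  define U where "U = {i\<in>I. lt b (P i)}"
  have "lt (P' i) (P' j)" if "i \<in> L" "j \<in> U" for i j
  proof -
    have "lt (P i) (P j)"
      using that lt_trans unfolding L_def U_def by blast
    moreover have "i \<in> I" "j \<in> I"
      using that unfolding L_def U_def by auto
    ultimately show ?thesis
      using iso by blast
  qed
  moreover have "finite L" "finite U" "P' ` L \<subseteq> S" "P' ` U \<subseteq> S"
    using I unfolding L_def U_def by auto
  ultimately obtain b' where b': "b' \<in> S" "\<forall>i\<in>L. lt (P' i) b'" "\<forall>j\<in>U. lt b' (P' j)"
    using subspace_separates[OF S, of "P' ` L" "P' ` U"] by auto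
  have "i \<in> L \<or> i \<in> U" if "i \<in> I" for i
    using that False lt_linear unfolding L_def U_def by blast
  then have "(b = P i \<longleftrightarrow> b' = P' i) \<and> (lt (P i) b \<longleftrightarrow> lt (P' i) b')" if "i \<in> I" for i
    using that b' False lt_irrefl lt_asym unfolding L_def U_def by blast
  with b'(1) show ?thesis
    by blast
qed

end

text \<open>A linear form \<open>\<Sum> c * x\<^sub>i\<close> in the variables \<open>x\<^sub>0, x\<^sub>1, \<dots>\<close> is a list of pairs \<open>(i, c)\<close>.\<close>

type_synonym 'c linform = "(nat \<times> 'c) list"

definition lf_coeff :: "nat \<Rightarrow> 'c::field linform \<Rightarrow> 'c" where
  "lf_coeff m l = sum_list (map snd (filter (\<lambda>(i, c). i = m) l))"

definition lf_drop :: "nat \<Rightarrow> 'c::field linform \<Rightarrow> 'c linform" where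
  "lf_drop m l = filter (\<lambda>(i, c). i \<noteq> m) l"

definition lf_scale :: "'c::field \<Rightarrow> 'c linform \<Rightarrow> 'c linform" where
  "lf_scale k l = map (\<lambda>(i, c). (i, k * c)) l"

definition lf_diff :: "'c::field linform \<Rightarrow> 'c linform \<Rightarrow> 'c linform" where
  "lf_diff l l' = l @ lf_scale (- 1) l'"

text \<open>The root of \<open>l\<close> as a function of \<open>x\<^sub>m\<close>, expressed in the other variables;
meaningless when \<open>x\<^sub>m\<close> does not occur in \<open>l\<close>.\<close>

definition lf_solve :: "nat \<Rightarrow> 'c::field linform \<Rightarrow> 'c linform" where
  "lf_solve m l = lf_scale (- 1 / lf_coeff m l) (lf_drop m l)"

fun lf_of_term :: "'c::field oterm \<Rightarrow> 'c linform" where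
  "lf_of_term (OVar n) = [(n, 1)]"
| "lf_of_term (OPlus s t) = lf_of_term s @ lf_of_term t"
| "lf_of_term (OScal c t) = lf_scale c (lf_of_term t)"

text \<open>Fourier-Motzkin step: the signs of these forms fix the order type of the roots of the
forms of \<open>T\<close> involving \<open>x\<^sub>m\<close>, so any cut of \<open>x\<^sub>m\<close> among the roots under one assignment is
realized under any other assignment giving them the same signs.\<close>

definition eliminate_forms :: "nat \<Rightarrow> 'c::field linform list \<Rightarrow> 'c linform list" where
  "eliminate_forms m T =
     (let T' = filter (\<lambda>l. lf_coeff m l \<noteq> 0) T
      in map (lf_drop m) T @ [lf_diff (lf_solve m l') (lf_solve m l). l \<leftarrow> T', l' \<leftarrow> T'])"

context ordered_vector_space
begin

definition lf_eval :: "(nat \<Rightarrow> 'g) \<Rightarrow> 'c linform \<Rightarrow> 'g" where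
  "lf_eval e l = sum_list (map (\<lambda>(i, c). smul c (e i)) l)"

lemma lf_eval_Nil [simp]: "lf_eval e [] = 0"
  by (simp add: lf_eval_def)

lemma lf_eval_Cons [simp]: "lf_eval e ((i, c) # l) = smul c (e i) + lf_eval e l"
  by (simp add: lf_eval_def)

lemma lf_eval_append [simp]: "lf_eval e (l @ l') = lf_eval e l + lf_eval e l'"
  by (simp add: lf_eval_def)

lemma lf_eval_scale [simp]: "lf_eval e (lf_scale k l) = smul k (lf_eval e l)"
  by (induction l) (auto simp: lf_scale_def V.scale_right_distrib)

lemma lf_eval_diff [simp]: "lf_eval e (lf_diff l l') = lf_eval e l - lf_eval e l'"
  by (simp add: lf_diff_def)

lemma lf_eval_of_term [simp]: "lf_eval e (lf_of_term t) = oeval smul e t"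
  by (induction t) auto

lemma lf_eval_update: "lf_eval (e(m := x)) l = smul (lf_coeff m l) x + lf_eval e (lf_drop m l)"
  by (induction l) (auto simp: lf_coeff_def lf_drop_def V.scale_left_distrib algebra_simps)

lemma lf_eval_update_solve:
  assumes "lf_coeff m l \<noteq> 0"
  shows "lf_eval (e(m := x)) l = smul (lf_coeff m l) (x - lf_eval e (lf_solve m l))"
  using assms
  by (simp add: lf_eval_update lf_solve_def V.scale_right_diff_distrib V.scale_right_distrib)

lemma lf_eval_in_subspace: "V.subspace S \<Longrightarrow> (\<And>n. e n \<in> S) \<Longrightarrow> lf_eval e l \<in> S"
  by (induction l) (auto simp: V.subspace_0 V.subspace_add V.subspace_scale)

definition same_signs :: "'c linform list \<Rightarrow> (nat \<Rightarrow> 'g) \<Rightarrow> (nat \<Rightarrow> 'g) \<Rightarrow> bool" where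
  "same_signs T e e' \<longleftrightarrow> (\<forall>l\<in>set T. same_sign (lf_eval e l) (lf_eval e' l))"

lemma same_signs_refl: "same_signs T e e"
  by (simp add: same_signs_def same_sign_def)

lemma same_signs_sym: "same_signs T e e' \<Longrightarrow> same_signs T e' e"
  by (simp add: same_signs_def same_sign_sym)

lemma same_signs_update:
  assumes drop: "same_signs (map (lf_drop m) T) e e'"
    and solve: "\<And>l. l \<in> set T \<Longrightarrow> lf_coeff m l \<noteq> 0 \<Longrightarrow>
      same_sign (x - lf_eval e (lf_solve m l)) (x' - lf_eval e' (lf_solve m l))"
  shows "same_signs T (e(m := x)) (e'(m := x'))"
  unfolding same_signs_def
proof
  fix l assume l: "l \<in> set T"
  show "same_sign (lf_eval (e(m := x)) l) (lf_eval (e'(m := x')) l)"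
  proof (cases "lf_coeff m l = 0")
    case True
    then show ?thesis
      using drop l by (simp add: same_signs_def lf_eval_update)
  next
    case False
    then show ?thesis
      using same_sign_scale[OF False solve[OF l False]] by (simp add: lf_eval_update_solve)
  qed
qed

lemma same_signs_update_realized:
  assumes S: "V.subspace S" "s \<in> S" "lt 0 s"
    and solve_in: "\<And>l. l \<in> set T \<Longrightarrow> lf_eval e' (lf_solve m l) \<in> S"
    and signs: "same_signs (eliminate_forms m T) e e'"
  shows "\<exists>x'\<in>S. same_signs T (e(m := x)) (e'(m := x'))"
proof -
  define T' where "T' = filter (\<lambda>l. lf_coeff m l \<noteq> 0) T"
  define P where "P l = lf_eval e (lf_solve m l)" for l
  define P' where "P' l = lf_eval e' (lf_solve m l)" for l
  have "(P l = P l' \<longleftrightarrow> P' l = P' l') \<and> (lt (P l) (P l') \<longleftrightarrow> lt (P' l) (P' l'))"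
    if "l \<in> set T'" "l' \<in> set T'" for l l'
  proof -
    have "lf_diff (lf_solve m l') (lf_solve m l) \<in> set (eliminate_forms m T)"
      using that unfolding eliminate_forms_def T'_def Let_def by auto
    then have "same_sign (P l' - P l) (P' l' - P' l)"
      using signs unfolding same_signs_def P_def P'_def by (metis lf_eval_diff)
    then show ?thesis
      unfolding same_sign_diff_iff by metis
  qed
  moreover have "P' ` set T' \<subseteq> S"
    using solve_in unfolding P'_def T'_def by auto
  ultimately obtain x' where x': "x' \<in> S"
    "\<forall>l\<in>set T'. (x = P l \<longleftrightarrow> x' = P' l) \<and> (lt (P l) x \<longleftrightarrow> lt (P' l) x')"
    using cut_realized_in_subspace[OF S, of "set T'" P' P x] by blast
  have "same_signs T (e(m := x)) (e'(m := x'))"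
  proof (rule same_signs_update)
    show "same_signs (map (lf_drop m) T) e e'"
      using signs unfolding same_signs_def eliminate_forms_def Let_def by auto
    show "same_sign (x - lf_eval e (lf_solve m l)) (x' - lf_eval e' (lf_solve m l))"
      if "l \<in> set T" "lf_coeff m l \<noteq> 0" for l
      using x'(2) that unfolding same_sign_diff_iff P_def P'_def T'_def by auto
  qed
  with x'(1) show ?thesis
    by blast
qed

definition sign_invariant :: "'c linform list \<Rightarrow> 'c oform \<Rightarrow> bool" where
  "sign_invariant T f \<longleftrightarrow>
     (\<forall>e e'. same_signs T e e' \<longrightarrow> (osat lt smul UNIV f e \<longleftrightarrow> osat lt smul UNIV f e'))"

lemma sign_invariant_OEq: "sign_invariant [lf_diff (lf_of_term s) (lf_of_term t)] (OEq s t)"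
  by (simp add: sign_invariant_def same_signs_def same_sign_def)

lemma sign_invariant_OLess: "sign_invariant [lf_diff (lf_of_term t) (lf_of_term s)] (OLess s t)"
  by (simp add: sign_invariant_def same_signs_def same_sign_def diff_pos_iff)

lemma sign_invariant_ONot: "sign_invariant T f \<Longrightarrow> sign_invariant T (ONot f)"
  by (simp add: sign_invariant_def)

lemma sign_invariant_OAnd:
  "sign_invariant T f \<Longrightarrow> sign_invariant T' g \<Longrightarrow> sign_invariant (T @ T') (OAnd f g)"
  unfolding sign_invariant_def same_signs_def by (metis Un_iff osat.simps(4) set_append)

lemma sign_invariant_OEx:
  assumes "lt 0 s" and f: "sign_invariant T f"
  shows "sign_invariant (eliminate_forms m T) (OEx m f)"
proof -
  have witness: "\<exists>x'. osat lt smul UNIV f (e'(m := x'))"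
    if signs: "same_signs (eliminate_forms m T) e e'" and x: "osat lt smul UNIV f (e(m := x))"
    for e e' x
  proof -
    obtain x' where "same_signs T (e(m := x)) (e'(m := x'))"
      using same_signs_update_realized[OF V.subspace_UNIV _ assms(1) _ signs] by blast
    with f x show ?thesis
      unfolding sign_invariant_def by blast
  qed
  show ?thesis
    unfolding sign_invariant_def osat.simps
    using witness same_signs_sym by blast
qed

lemma exists_sign_invariant:
  assumes "lt 0 s"
  shows "\<exists>T. sign_invariant T f"
proof (induction f)
  case (OEq s t)
  then show ?case using sign_invariant_OEq by blast
next
  case (OLess s t)
  then show ?case using sign_invariant_OLess by blast
next
  case (ONot f)
  then show ?case using sign_invariant_ONot by blast
next
  case (OAnd f g)
  then show ?case using sign_invariant_OAnd by blast
next
  case (OEx m f)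
  then show ?case using sign_invariant_OEx[OF assms] by blast
qed

lemma osat_subspace_iff:
  assumes S: "V.subspace S" "s \<in> S" "lt 0 s"
  shows "(\<And>n. e n \<in> S) \<Longrightarrow> osat lt smul S f e \<longleftrightarrow> osat lt smul UNIV f e"
proof (induction f arbitrary: e)
  case (OEx m f)
  have "\<exists>x'\<in>S. osat lt smul UNIV f (e(m := x'))" if x: "osat lt smul UNIV f (e(m := x))" for x
  proof -
    obtain T where T: "sign_invariant T f"
      using exists_sign_invariant[OF S(3)] by blast
    have "lf_eval e (lf_solve m l) \<in> S" for l
      using lf_eval_in_subspace[OF S(1)] OEx.prems .
    then obtain x' where "x' \<in> S" "same_signs T (e(m := x)) (e(m := x'))"
      using same_signs_update_realized[OF S, of T e m e x] same_signs_refl by blast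
    with T x show ?thesis
      unfolding sign_invariant_def by blast
  qed
  moreover have "osat lt smul S f (e(m := x)) \<longleftrightarrow> osat lt smul UNIV f (e(m := x))" if "x \<in> S" for x
  proof -
    have "(e(m := x)) n \<in> S" for n
      using OEx.prems that by simp
    then show ?thesis
      by (rule OEx.IH)
  qed
  ultimately show ?case
    by auto
qed auto

theorem elementary_substructure_subspace:
  assumes S: "V.subspace S" "S \<noteq> {0}"
  shows "elementary_substructure lt smul S"
proof -
  obtain x where x: "x \<in> S" "x \<noteq> 0"
    using S V.subspace_0 by blast
  obtain s where s: "s \<in> S" "lt 0 s"
  proof (cases "lt 0 x")
    case False
    then have "lt 0 (- x)"
      using x(2) lt_linear diff_pos_iff[of 0 x] by auto
    then show ?thesis
      using that V.subspace_neg[OF S(1) x(1)] by blast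
  qed (use that x in blast)
  show ?thesis
    unfolding elementary_substructure_def
    using s(1) V.subspace_add[OF S(1)] V.subspace_scale[OF S(1)] osat_subspace_iff[OF S(1) s]
    by blast
qed

end

locale hamel_valuation =
  fixes lt0 lt1 :: "'g::ab_group_add \<Rightarrow> 'g \<Rightarrow> bool"
    and smul :: "'c::linordered_field \<Rightarrow> 'g \<Rightarrow> 'g"
    and v :: "'g \<Rightarrow> 'g option"
  assumes hamel: "hamel_space lt0 lt1 smul v"
begin

sublocale ordered_vector_space lt0 smul
  using hamel by (simp add: hamel_space_def ordered_vector_space_def)

lemma val_eq_None_iff: "v x = None \<longleftrightarrow> x = 0"
  using hamel unfolding hamel_space_def by auto

lemma val_scale: "c \<noteq> 0 \<Longrightarrow> v (smul c x) = v x"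
  using hamel unfolding hamel_space_def by auto

lemma val_uminus: "v (- x) = v x"
  using val_scale[of "- 1" x] by simp

lemma val_idem: "v x = Some g \<Longrightarrow> v g = Some g"
  using hamel unfolding hamel_space_def by auto

lemma val_add: "ole lt0 (omin lt0 (v x) (v y)) (v (x + y))"
  using hamel unfolding hamel_space_def by auto

lemma val_add_eq_left:
  assumes a: "v a = Some p" and b: "v b = Some q" and "lt0 p q"
  shows "v (a + b) = Some p"
proof (rule ccontr)
  assume "v (a + b) \<noteq> Some p"
  moreover have "ole lt0 (Some p) (v (a + b))"
    using val_add[of a b] a b \<open>lt0 p q\<close> by (simp add: omin_def ole_def)
  ultimately have "olt lt0 (Some p) (omin lt0 (v (a + b)) (Some q))"
    using \<open>lt0 p q\<close> by (auto simp: omin_def ole_def)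
  moreover have "ole lt0 (omin lt0 (v (a + b)) (Some q)) (Some p)"
    using val_add[of "a + b" "- b"] a b val_uminus[of b] by simp
  ultimately show False
    unfolding ole_def by (metis olt_trans olt_irrefl)
qed

lemma val_sum_fixed_points:
  assumes "finite F" "F \<noteq> {}" "\<And>g. g \<in> F \<Longrightarrow> v g = Some g" "\<And>g. g \<in> F \<Longrightarrow> u g \<noteq> 0"
  shows "\<exists>m\<in>F. v (\<Sum>g\<in>F. smul (u g) g) = Some m \<and> (\<forall>g\<in>F. g \<noteq> m \<longrightarrow> lt0 m g)"
  using assms
proof (induction F rule: finite_ne_induct)
  case (singleton g)
  then show ?case
    by (simp add: val_scale)
next
  case (insert g F)
  then obtain m where m: "m \<in> F" "v (\<Sum>g\<in>F. smul (u g) g) = Some m" "\<forall>h\<in>F. h \<noteq> m \<longrightarrow> lt0 m h"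
    by auto
  have vg: "v (smul (u g) g) = Some g"
    using insert.prems by (simp add: val_scale)
  have sum: "(\<Sum>g\<in>insert g F. smul (u g) g) = smul (u g) g + (\<Sum>g\<in>F. smul (u g) g)"
    using insert.hyps by simp
  have "g \<noteq> m"
    using insert.hyps m(1) by auto
  then consider "lt0 g m" | "lt0 m g"
    using lt_linear by blast
  then show ?case
  proof cases
    case 1
    then have "v (\<Sum>g\<in>insert g F. smul (u g) g) = Some g"
      unfolding sum using val_add_eq_left[OF vg m(2)] by blast
    then show ?thesis
      using m(3) 1 lt_trans by auto
  next
    case 2
    then have "v (\<Sum>g\<in>insert g F. smul (u g) g) = Some m"
      unfolding sum add.commute[of "smul (u g) g"] using val_add_eq_left[OF m(2) vg] by blast
    then show ?thesis
      using m 2 by auto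
  qed
qed

lemma fixed_points_independent: "\<not> V.dependent {h. v h = Some h}"
proof
  assume "V.dependent {h. v h = Some h}"
  then obtain t u where t: "finite t" "t \<subseteq> {h. v h = Some h}" "(\<Sum>g\<in>t. smul (u g) g) = 0"
    and "\<exists>g\<in>t. u g \<noteq> 0"
    unfolding V.dependent_explicit by blast
  define F where "F = {g\<in>t. u g \<noteq> 0}"
  have "(\<Sum>g\<in>F. smul (u g) g) = 0"
    using t(1,3) sum.mono_neutral_left[of t F "\<lambda>g. smul (u g) g"] unfolding F_def by auto
  moreover have "finite F" "F \<noteq> {}"
    using t(1) \<open>\<exists>g\<in>t. u g \<noteq> 0\<close> unfolding F_def by auto
  moreover have "\<And>g. g \<in> F \<Longrightarrow> v g = Some g" "\<And>g. g \<in> F \<Longrightarrow> u g \<noteq> 0"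
    using t(2) unfolding F_def by auto
  ultimately show False
    using val_sum_fixed_points[of F u] val_eq_None_iff by force
qed

lemma fixed_points_dense:
  assumes "dense_hamel lt0 v"
  shows "dense_in lt0 {h. v h = Some h}"
  unfolding dense_in_def
proof (intro allI impI)
  fix a b assume "lt0 a b"
  then obtain c where c: "olt lt0 (Some a) (v c)" "olt lt0 (v c) (Some b)"
    using assms unfolding dense_hamel_def by blast
  then obtain h where "v c = Some h"
    by (cases "v c") auto
  with c val_idem show "\<exists>h\<in>{h. v h = Some h}. lt0 a h \<and> lt0 h b"
    by auto
qed

lemma subspace_val_not_less: "V.subspace {x. \<not> olt lt0 (v x) g}"
proof -
  have "x + y \<in> {x. \<not> olt lt0 (v x) g}"
    if "\<not> olt lt0 (v x) g" "\<not> olt lt0 (v y) g" for x y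
  proof -
    have "\<not> olt lt0 (omin lt0 (v x) (v y)) g"
      using that by (simp add: omin_def)
    then show ?thesis
      using val_add[of x y] olt_trans unfolding ole_def by auto
  qed
  moreover have "\<not> olt lt0 (v (smul c x)) g" if "\<not> olt lt0 (v x) g" for c x
    using that val_scale[of c x] val_eq_None_iff[of 0] by (cases "c = 0") auto
  ultimately show ?thesis
    unfolding V.subspace_def using val_eq_None_iff[of 0] by auto
qed

end

lemma hdefinable_fixed_points:
  fixes smul :: "'c \<Rightarrow> 'g::ab_group_add \<Rightarrow> 'g"
  shows "hdefinable lt0 lt1 smul v (Some ` {h. v h = Some h})"
  unfolding hdefinable_def
  by (rule exI[of _ "HAnd (HEq (HVal (HVar 0)) (HVar 0)) (HNot (HEq (HVar 0) HInf))"],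
      rule exI[of _ "\<lambda>_. None"]) (auto split: option.splits)

lemma hdefinable_val_not_less:
  fixes smul :: "'c \<Rightarrow> 'g::ab_group_add \<Rightarrow> 'g"
  shows "hdefinable lt0 lt1 smul v (Some ` {x. \<not> olt lt0 (v x) (Some g)})"
  unfolding hdefinable_def
  by (rule exI[of _ "HAnd (HNot (HEq (HVar 0) HInf)) (HNot (HLess0 (HVal (HVar 0)) (HVar 1)))"],
      rule exI[of _ "(\<lambda>_. None)(1 := Some g)"]) (auto split: option.splits)

lemma exists_pos_if_independent_hamel:
  assumes "independent_hamel lt0 lt1"
  shows "\<exists>w. lt0 0 w"
proof -
  obtain z where "above_lb lt0 (Some 0) z"
    using assms[unfolded independent_hamel_def, rule_format, of "Some 0" None None None]
    by (auto simp: ext_lt_def)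
  then show ?thesis
    by (auto simp: above_lb_def)
qed

theorem corollary6p1:
  fixes lt0 lt1 :: "'g::ab_group_add \<Rightarrow> 'g \<Rightarrow> bool"
    and smul :: "'c::linordered_field \<Rightarrow> 'g \<Rightarrow> 'g"
    and v :: "'g \<Rightarrow> 'g option"
  assumes "model_T_Ham lt0 lt1 smul v"
  shows "(\<exists>H. hdefinable lt0 lt1 smul v (Some ` H) \<and> \<not> module.dependent smul H \<and> dense_in lt0 H)
       \<and> (\<exists>S. hdefinable lt0 lt1 smul v (Some ` S) \<and> S \<noteq> UNIV \<and> elementary_substructure lt0 smul S)"
proof -
  interpret hamel_valuation lt0 lt1 smul v
    using assms by unfold_locales (simp add: model_T_Ham_def)
  have dense: "dense_hamel lt0 v"
    using assms by (simp add: model_T_Ham_def)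
  obtain w where "lt0 0 w"
    using assms exists_pos_if_independent_hamel unfolding model_T_Ham_def by blast
  then obtain g where g: "v w = Some g"
    using val_eq_None_iff lt_irrefl by (cases "v w") auto
  then have "v g = Some g"
    by (rule val_idem)
  define S where "S = {x. \<not> olt lt0 (v x) (Some g)}"
  have "g \<in> S"
    using \<open>v g = Some g\<close> lt_irrefl unfolding S_def by simp
  moreover have "g \<noteq> 0"
    using \<open>v g = Some g\<close> val_eq_None_iff[of g] by auto
  ultimately have "S \<noteq> {0}"
    by blast
  obtain c where "olt lt0 (v c) (Some g)"
    using dense lt_diff_pos[OF \<open>lt0 0 w\<close>, of g] unfolding dense_hamel_def by blast
  then have "S \<noteq> UNIV"
    unfolding S_def by blast
  show ?thesis
    using hdefinable_fixed_points fixed_points_independent fixed_points_dense[OF dense]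
      hdefinable_val_not_less[of lt0 lt1 smul v g] \<open>S \<noteq> UNIV\<close>
      elementary_substructure_subspace[OF subspace_val_not_less \<open>S \<noteq> {0}\<close>[unfolded S_def]]
    unfolding S_def by blast
qed

end
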